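(* Let $s\ge1$ and let $\mathcal{G}_{2s}\subset GL_{2s}(\mathbb{Z})$ be the group generated by the linear maps $\sigma_1,\dotsc,\sigma_{2s}$ of $\mathbb{Z}^{2s}$ given in coordinates $k=(k_1,\dotsc,k_{2s})$ by \[ \sigma_1:\ k_1\mapsto k_1,\quad k_j\mapsto k_j+k_1\ (j>1); \] \[ \sigma_i\ (2\le i\le 2s):\ k_{i-1}\mapsto 2k_{i-1}-k_i,\quad k_i\mapsto k_{i-1},\quad k_j\mapsto k_j\ (j\ne i-1,i). \] For nonzero $k\in\mathbb{Z}^{2s}$ put $\gamma(k)=\gcd(k_1,\dotsc,k_{2s})$, $\alpha(k)=\#\{i:\ k_i/\gamma(k)\equiv1\pmod2\}$ and $\delta(k)=|2\alpha(k)-2s-1|$. Then the map $k\mapsto(\gamma(k),\delta(k))$ induces a bijection between the set of orbits of $\mathcal{G}_{2s}$ on $\mathbb{Z}^{2s}\setminus\{0\}$ and the set of pairs $(\gamma,\delta)$ with $\gamma\in\mathbb{Z}_{>0}$ and $\delta\in\{1,3,5,\dotsc,2s-1\}$. *)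

theory Defs
  imports Main
begin

text \<open>Vectors of Z^n, coordinates indexed 1..n, zero outside.\<close>
definition vecs :: "nat \<Rightarrow> (nat \<Rightarrow> int) set" where
  "vecs n = {k. \<forall>j. j \<notin> {1..n} \<longrightarrow> k j = 0}"

definition sigma :: "nat \<Rightarrow> nat \<Rightarrow> (nat \<Rightarrow> int) \<Rightarrow> (nat \<Rightarrow> int)" where
  "sigma n i k =
     (if i = 1 then (\<lambda>j. if 1 < j \<and> j \<le> n then k j + k 1 else k j)
      else (\<lambda>j. if j = i - 1 then 2 * k (i - 1) - k i
                else if j = i then k (i - 1) else k j))"

inductive_set grp :: "nat \<Rightarrow> ((nat \<Rightarrow> int) \<Rightarrow> (nat \<Rightarrow> int)) set" for n where
  grp_id: "id \<in> grp n"
| grp_gen: "g \<in> grp n \<Longrightarrow> i \<in> {1..n} \<Longrightarrow> sigma n i \<circ> g \<in> grp n"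
| grp_inv: "g \<in> grp n \<Longrightarrow> i \<in> {1..n} \<Longrightarrow> inv_into (vecs n) (sigma n i) \<circ> g \<in> grp n"

definition orbit :: "nat \<Rightarrow> (nat \<Rightarrow> int) \<Rightarrow> (nat \<Rightarrow> int) set" where
  "orbit n k = {g k | g. g \<in> grp n}"

definition orbits :: "nat \<Rightarrow> (nat \<Rightarrow> int) set set" where
  "orbits n = orbit n ` (vecs n - {\<lambda>_. 0})"

definition gam :: "nat \<Rightarrow> (nat \<Rightarrow> int) \<Rightarrow> int" where
  "gam n k = Gcd (k ` {1..n})"

definition alph :: "nat \<Rightarrow> (nat \<Rightarrow> int) \<Rightarrow> nat" where
  "alph n k = card {i \<in> {1..n}. odd (k i div gam n k)}"

definition delt :: "nat \<Rightarrow> (nat \<Rightarrow> int) \<Rightarrow> int" where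
  "delt s k = \<bar>2 * int (alph (2*s) k) - 2 * int s - 1\<bar>"

end

(*
  Write a vector k of Z^n as the differences k_j = x_j - x_0 of an integer sequence
  x_0, ..., x_n (diff_vec). In these coordinates sigma_i becomes the move adding
  x_(i-1) - x_i to both x_(i-1) and x_i, so orbits become classes of the relation reach.
  Moves preserve the alternating sum of x, the number of odd entries of x (a unit move swaps
  the parities of the pair) and the gcd of the differences.

  Conversely, for even n, primitive sequences with equal alternating sum and equal number of
  odd entries are connected. For n = 2 this is the Euclidean algorithm on the two differences.
  For n + 2, one first makes the block x_0..x_n primitive and the tail pair x_(n+1), x_(n+2)
  equal; the induction hypothesis then moves equal tail pairs by even amounts, and trades an
  odd tail pair for two more odd entries in the block when the parities of the tails differ.

  Finally gamma(k) is the gcd of the differences, and delta(k) = |2 alpha - n - 1| records the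
  number of odd entries of x / gamma up to complementation, which is the ambiguity coming from
  the free choice of x_0; the alternating sum, which x_0 can shift arbitrarily and which has the
  parity of that number, resolves it.
*)

theory Submission
  imports Defs "HOL-Combinatorics.Transposition"
begin

section \<open>Moves on integer sequences\<close>

definition move :: "nat \<Rightarrow> int \<Rightarrow> (nat \<Rightarrow> int) \<Rightarrow> nat \<Rightarrow> int" where
  "move i m x = (\<lambda>j. if j = i - 1 \<or> j = i then x j + m * (x (i - 1) - x i) else x j)"

lemma move_move: "1 \<le> i \<Longrightarrow> move i a (move i b x) = move i (a + b) x"
  unfolding move_def by (rule ext) (auto simp: algebra_simps)

lemma move_zero [simp]: "move i 0 x = x"
  unfolding move_def by auto

inductive reach :: "nat \<Rightarrow> (nat \<Rightarrow> int) \<Rightarrow> (nat \<Rightarrow> int) \<Rightarrow> bool" for n where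
  reach_refl: "reach n x x"
| reach_step: "reach n x y \<Longrightarrow> 1 \<le> i \<Longrightarrow> i \<le> n \<Longrightarrow> e = 1 \<or> e = -1 \<Longrightarrow> reach n x (move i e y)"

lemma reach_trans:
  assumes "reach n x y" "reach n y z"
  shows "reach n x z"
  using assms(2,1) by (induction rule: reach.induct) (auto intro: reach.intros)

lemma reach_move:
  assumes "reach n x y" "1 \<le> i" "i \<le> n"
  shows "reach n x (move i m y)"
proof (induction m rule: int_induct[where k = 0])
  case base
  then show ?case using assms(1) by simp
next
  case (step1 m)
  then show ?case
    using reach_step[of n x "move i m y" i 1] assms(2,3) by (simp add: move_move add.commute)
next
  case (step2 m)
  then show ?case
    using reach_step[of n x "move i m y" i "-1"] assms(2,3) by (simp add: move_move)
qed

lemma reach_sym: "reach n x y \<Longrightarrow> reach n y x"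
proof (induction rule: reach.induct)
  case (reach_step x y i e)
  have "reach n (move i e y) (move i (- e) (move i e y))"
    using reach_step.hyps by (intro reach_move reach_refl)
  then have "reach n (move i e y) y"
    using reach_step.hyps by (simp add: move_move)
  then show ?case using reach_step.IH reach_trans by blast
qed (rule reach_refl)

lemma reach_mono: "reach m x y \<Longrightarrow> m \<le> n \<Longrightarrow> reach n x y"
  by (induction rule: reach.induct) (auto intro: reach.intros)

section \<open>Invariants\<close>

definition alt_sum :: "nat \<Rightarrow> (nat \<Rightarrow> int) \<Rightarrow> int" where
  "alt_sum r x = (\<Sum>i\<le>r. (-1) ^ i * x i)"

definition odd_count :: "nat \<Rightarrow> (nat \<Rightarrow> int) \<Rightarrow> nat" where
  "odd_count r x = card {i. i \<le> r \<and> odd (x i)}"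

definition dvd_diffs :: "int \<Rightarrow> nat \<Rightarrow> (nat \<Rightarrow> int) \<Rightarrow> bool" where
  "dvd_diffs d r x \<longleftrightarrow> (\<forall>i\<le>r. d dvd x i - x 0)"

definition primitive :: "nat \<Rightarrow> (nat \<Rightarrow> int) \<Rightarrow> bool" where
  "primitive r x \<longleftrightarrow> (\<forall>d. dvd_diffs d r x \<longrightarrow> d dvd 1)"

lemma alt_sum_cong: "(\<And>i. i \<le> r \<Longrightarrow> x i = y i) \<Longrightarrow> alt_sum r x = alt_sum r y"
  unfolding alt_sum_def by (rule sum.cong) auto

lemma odd_count_cong: "(\<And>i. i \<le> r \<Longrightarrow> x i = y i) \<Longrightarrow> odd_count r x = odd_count r y"
  unfolding odd_count_def by (rule arg_cong[where f = card]) auto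

lemma dvd_diffs_cong: "(\<And>i. i \<le> r \<Longrightarrow> x i = y i) \<Longrightarrow> dvd_diffs d r x = dvd_diffs d r y"
  unfolding dvd_diffs_def by auto

lemma primitive_cong: "(\<And>i. i \<le> r \<Longrightarrow> x i = y i) \<Longrightarrow> primitive r x = primitive r y"
  unfolding primitive_def using dvd_diffs_cong by blast

lemma alt_sum_Suc: "alt_sum (Suc r) x = alt_sum r x + (-1) ^ Suc r * x (Suc r)"
  unfolding alt_sum_def by simp

lemma alt_sum_Suc_Suc:
  "even r \<Longrightarrow> alt_sum (Suc (Suc r)) x = alt_sum r x - x (Suc r) + x (Suc (Suc r))"
  by (simp add: alt_sum_Suc)

lemma odd_count_Suc:
  "odd_count (Suc r) x = odd_count r x + (if odd (x (Suc r)) then 1 else 0)"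
proof -
  have "{i. i \<le> Suc r \<and> odd (x i)} =
      {i. i \<le> r \<and> odd (x i)} \<union> (if odd (x (Suc r)) then {Suc r} else {})"
    by (auto simp: le_Suc_eq)
  then show ?thesis unfolding odd_count_def by (simp add: card_insert_if)
qed

lemma odd_count_Suc_Suc:
  "odd_count (Suc (Suc r)) x =
     odd_count r x + (if odd (x (Suc r)) then 1 else 0) + (if odd (x (Suc (Suc r))) then 1 else 0)"
  by (simp add: odd_count_Suc)

lemma alt_sum_equal_pair:
  "even r \<Longrightarrow> x (Suc r) = x (Suc (Suc r)) \<Longrightarrow> alt_sum (Suc (Suc r)) x = alt_sum r x"
  by (simp add: alt_sum_Suc_Suc)

lemma odd_count_equal_pair:
  "x (Suc r) = x (Suc (Suc r)) \<Longrightarrow>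
     odd_count (Suc (Suc r)) x = odd_count r x + (if odd (x (Suc r)) then 2 else 0)"
  by (simp add: odd_count_Suc_Suc)

lemma dvd_diffs_Suc: "dvd_diffs d (Suc r) x \<longleftrightarrow> dvd_diffs d r x \<and> d dvd x (Suc r) - x r"
  unfolding dvd_diffs_def
proof (intro iffI conjI allI impI)
  assume H: "\<forall>i\<le>Suc r. d dvd x i - x 0"
  then show "d dvd x i - x 0" if "i \<le> r" for i using that by simp
  have "d dvd x (Suc r) - x 0" "d dvd x r - x 0" using H by auto
  from dvd_diff[OF this] show "d dvd x (Suc r) - x r" by simp
next
  fix i assume H: "(\<forall>i\<le>r. d dvd x i - x 0) \<and> d dvd x (Suc r) - x r" and "i \<le> Suc r"
  then consider "i \<le> r" | "i = Suc r" by linarith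
  then show "d dvd x i - x 0"
  proof cases
    case 2
    have "d dvd (x (Suc r) - x r) + (x r - x 0)" using H by (intro dvd_add) auto
    then show ?thesis using 2 by simp
  qed (use H in auto)
qed

lemma alt_sum_odd_count_parity: "even (alt_sum r x - int (odd_count r x))"
proof (induction r)
  case 0
  have "{i. i \<le> 0 \<and> odd (x i)} = (if odd (x 0) then {0} else {})"
    by (cases "odd (x 0)") force+
  then show ?case by (simp add: alt_sum_def odd_count_def)
next
  case (Suc r)
  have "even ((-1) ^ Suc r * x (Suc r) - (if odd (x (Suc r)) then 1 else 0))"
    by (cases "even r") auto
  with Suc show ?case
    by (simp add: alt_sum_Suc odd_count_Suc)
qed

lemma odd_count_complement: "odd_count r x + card {i. i \<le> r \<and> even (x i)} = Suc r"
proof -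
  have "card ({i. i \<le> r \<and> odd (x i)} \<union> {i. i \<le> r \<and> even (x i)}) =
      card {i. i \<le> r \<and> odd (x i)} + card {i. i \<le> r \<and> even (x i)}"
    by (rule card_Un_disjoint) auto
  moreover have "{i. i \<le> r \<and> odd (x i)} \<union> {i. i \<le> r \<and> even (x i)} = {..r}" by auto
  ultimately show ?thesis unfolding odd_count_def by simp
qed

lemma odd_count_le: "odd_count r x \<le> Suc r"
  using odd_count_complement[of r x] by linarith

lemma primitive_odd_count_bounds:
  assumes "primitive r x"
  shows "1 \<le> odd_count r x" "odd_count r x \<le> r"
proof -
  have "\<not> dvd_diffs 2 r x" using assms unfolding primitive_def by force
  then obtain i where i: "i \<le> r" "odd (x i - x 0)" unfolding dvd_diffs_def by auto
  then have "{i. i \<le> r \<and> odd (x i)} \<noteq> {}" "{i. i \<le> r \<and> even (x i)} \<noteq> {}"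
    by (cases "even (x 0)"; force)+
  then have "card {i. i \<le> r \<and> odd (x i)} > 0" "card {i. i \<le> r \<and> even (x i)} > 0"
    by (simp_all add: card_gt_0_iff)
  then show "1 \<le> odd_count r x" "odd_count r x \<le> r"
    using odd_count_complement[of r x] unfolding odd_count_def by simp_all
qed

lemma primitive_if_unit_step:
  assumes "1 \<le> k" "k \<le> r" "\<bar>x (k - 1) - x k\<bar> = 1"
  shows "primitive r x"
  unfolding primitive_def
proof (intro allI impI)
  fix d assume "dvd_diffs d r x"
  then have "d dvd (x (k - 1) - x 0) - (x k - x 0)"
    using assms unfolding dvd_diffs_def by (meson dvd_diff le_diff_iff' le_trans diff_le_self)
  then have "d dvd \<bar>x (k - 1) - x k\<bar>" by simp
  then show "d dvd 1" by (simp only: assms(3))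
qed

lemma alt_sum_move:
  assumes "1 \<le> i" "i \<le> r"
  shows "alt_sum r (move i m x) = alt_sum r x"
proof -
  define D where "D = m * (x (i - 1) - x i)"
  have "move i m x = (\<lambda>j. x j + (if j = i - 1 \<or> j = i then D else 0))"
    unfolding move_def D_def by auto
  then have "alt_sum r (move i m x) = alt_sum r x + (\<Sum>j\<le>r. (-1) ^ j * (if j = i - 1 \<or> j = i then D else 0))"
    unfolding alt_sum_def by (simp add: algebra_simps sum.distrib)
  also have "(\<Sum>j\<le>r. (-1) ^ j * (if j = i - 1 \<or> j = i then D else 0)) = (\<Sum>j\<in>{i - 1, i}. (-1) ^ j * D)"
    using assms by (intro sum.mono_neutral_cong_right) auto
  also have "\<dots> = ((-1) ^ (i - 1) + (-1) ^ i) * D"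
    using assms by (simp add: algebra_simps)
  also have "(-1::int) ^ (i - 1) + (-1) ^ i = 0"
    using assms by (cases i) auto
  finally show ?thesis by simp
qed

lemma odd_move_unit:
  assumes "1 \<le> i" "e = 1 \<or> e = -1"
  shows "odd (move i e x j) \<longleftrightarrow> odd (x (transpose (i - 1) i j))"
  using assms by (auto simp: move_def transpose_def)

lemma odd_count_move_unit:
  assumes "1 \<le> i" "i \<le> r" "e = 1 \<or> e = -1"
  shows "odd_count r (move i e x) = odd_count r x"
proof -
  let ?\<tau> = "transpose (i - 1) i"
  have "{j. j \<le> r \<and> odd (x j)} = ?\<tau> ` {j. j \<le> r \<and> odd (move i e x j)}"
  proof (intro set_eqI iffI)
    fix j assume "j \<in> {j. j \<le> r \<and> odd (x j)}"
    then show "j \<in> ?\<tau> ` {j. j \<le> r \<and> odd (move i e x j)}"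
      using assms odd_move_unit[OF assms(1,3), of x "?\<tau> j"]
      by (intro image_eqI[of _ _ "?\<tau> j"]) (auto simp: transpose_def)
  qed (use assms odd_move_unit[OF assms(1,3)] in \<open>auto simp: transpose_def\<close>)
  then show ?thesis
    unfolding odd_count_def by (simp add: card_image inj_on_subset[OF inj_transpose])
qed

lemma dvd_diffs_move:
  assumes "1 \<le> i" "i \<le> r" "dvd_diffs d r x"
  shows "dvd_diffs d r (move i m x)"
  unfolding dvd_diffs_def
proof (intro allI impI)
  fix j assume "j \<le> r"
  define D where "D = m * (x (i - 1) - x i)"
  let ?c = "\<lambda>j. if j = i - 1 \<or> j = i then 1 else 0 :: int"
  have "d dvd x (i - 1) - x 0" "d dvd x i - x 0"
    using assms unfolding dvd_diffs_def by auto
  from dvd_diff[OF this] have "d dvd D" unfolding D_def by simp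
  moreover have "d dvd x j - x 0" using assms(3) \<open>j \<le> r\<close> unfolding dvd_diffs_def by simp
  ultimately have "d dvd (x j - x 0) + (?c j - ?c 0) * D" by simp
  moreover have "move i m x j - move i m x 0 = (x j - x 0) + (?c j - ?c 0) * D"
    unfolding move_def D_def by (simp add: algebra_simps)
  ultimately show "d dvd move i m x j - move i m x 0" by simp
qed

lemma reach_alt_sum: "reach n x y \<Longrightarrow> alt_sum n y = alt_sum n x"
  by (induction rule: reach.induct) (simp_all add: alt_sum_move)

lemma reach_odd_count: "reach n x y \<Longrightarrow> odd_count n y = odd_count n x"
  by (induction rule: reach.induct) (simp_all add: odd_count_move_unit)

lemma reach_dvd_diffs_imp: "reach n x y \<Longrightarrow> dvd_diffs d n x \<Longrightarrow> dvd_diffs d n y"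
  by (induction rule: reach.induct) (simp_all add: dvd_diffs_move)

lemma reach_dvd_diffs: "reach n x y \<Longrightarrow> dvd_diffs d n y \<longleftrightarrow> dvd_diffs d n x"
  using reach_dvd_diffs_imp reach_sym by blast

lemma reach_primitive: "reach n x y \<Longrightarrow> primitive n y \<longleftrightarrow> primitive n x"
  unfolding primitive_def using reach_dvd_diffs by blast

definition diff_gcd :: "nat \<Rightarrow> (nat \<Rightarrow> int) \<Rightarrow> int" where
  "diff_gcd r x = Gcd ((\<lambda>i. x i - x 0) ` {..r})"

lemma dvd_diff_gcd_iff: "d dvd diff_gcd r x \<longleftrightarrow> dvd_diffs d r x"
  unfolding diff_gcd_def dvd_diffs_def dvd_Gcd_iff by auto

lemma dvd_diffs_diff_gcd: "dvd_diffs (diff_gcd r x) r x"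
  using dvd_diff_gcd_iff[of "diff_gcd r x" r x] by simp

lemma diff_gcd_nonneg: "diff_gcd r x \<ge> 0"
  unfolding diff_gcd_def by simp

lemma reach_diff_gcd:
  assumes "reach n x y"
  shows "diff_gcd n y = diff_gcd n x"
proof (rule zdvd_antisym_nonneg)
  have "dvd_diffs (diff_gcd n y) n x"
    using dvd_diffs_diff_gcd[of n y] reach_dvd_diffs[OF assms] by simp
  moreover have "dvd_diffs (diff_gcd n x) n y"
    using dvd_diffs_diff_gcd[of n x] reach_dvd_diffs[OF assms] by simp
  ultimately show "diff_gcd n y dvd diff_gcd n x" "diff_gcd n x dvd diff_gcd n y"
    by (simp_all add: dvd_diff_gcd_iff)
qed (simp_all add: diff_gcd_nonneg)

lemma primitive_div_diff_gcd:
  assumes "diff_gcd r x \<noteq> 0"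
  shows "primitive r (\<lambda>i. (x i - x 0) div diff_gcd r x)"
  unfolding primitive_def
proof (intro allI impI)
  let ?g = "diff_gcd r x"
  fix d assume H: "dvd_diffs d r (\<lambda>i. (x i - x 0) div ?g)"
  have "d * ?g dvd x i - x 0" if "i \<le> r" for i
  proof -
    have "?g dvd x i - x 0" using dvd_diffs_diff_gcd[of r x] that unfolding dvd_diffs_def by blast
    then have "x i - x 0 = (x i - x 0) div ?g * ?g" by simp
    moreover have "d dvd (x i - x 0) div ?g" using H that unfolding dvd_diffs_def by auto
    ultimately show ?thesis by (metis mult_dvd_mono dvd_refl)
  qed
  then have "dvd_diffs (d * ?g) r x" unfolding dvd_diffs_def by blast
  then have "d * ?g dvd ?g" by (simp add: dvd_diff_gcd_iff)
  then have "d * ?g dvd 1 * ?g" by simp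
  then show "d dvd 1" using assms by (simp only: dvd_mult_cancel_right) simp
qed

section \<open>Windows of three consecutive entries\<close>

definition window_ldiff :: "nat \<Rightarrow> (nat \<Rightarrow> int) \<Rightarrow> int" where
  "window_ldiff j x = x j - x (j - 1)"

definition window_rdiff :: "nat \<Rightarrow> (nat \<Rightarrow> int) \<Rightarrow> int" where
  "window_rdiff j x = x (j + 1) - x j"

definition window_alt :: "nat \<Rightarrow> (nat \<Rightarrow> int) \<Rightarrow> int" where
  "window_alt j x = x (j - 1) - x j + x (j + 1)"

definition window_gcd :: "nat \<Rightarrow> (nat \<Rightarrow> int) \<Rightarrow> int" where
  "window_gcd j x = gcd (window_ldiff j x) (window_rdiff j x)"

definition window_normal :: "nat \<Rightarrow> (nat \<Rightarrow> int) \<Rightarrow> nat \<Rightarrow> int" where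
  "window_normal j x =
     x(j - 1 := window_alt j x, j := window_alt j x + window_gcd j x,
       j + 1 := window_alt j x + window_gcd j x)"

lemma window_normal_eqI:
  assumes "1 \<le> j" "window_alt j y = window_alt j x" "window_gcd j y = window_gcd j x"
    "\<And>l. l \<noteq> j - 1 \<Longrightarrow> l \<noteq> j \<Longrightarrow> l \<noteq> j + 1 \<Longrightarrow> y l = x l"
  shows "window_normal j y = window_normal j x"
  unfolding window_normal_def using assms by (intro ext) auto

lemma window_move_left_pair:
  assumes "1 \<le> j"
  shows "window_ldiff j (move j m x) = window_ldiff j x"
    "window_rdiff j (move j m x) = window_rdiff j x + m * window_ldiff j x"
    "window_alt j (move j m x) = window_alt j x"
    "\<And>l. l \<noteq> j - 1 \<Longrightarrow> l \<noteq> j \<Longrightarrow> move j m x l = x l"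
  using assms unfolding window_ldiff_def window_rdiff_def window_alt_def move_def
  by (auto simp: algebra_simps)

lemma window_move_right_pair:
  assumes "1 \<le> j"
  shows "window_ldiff j (move (Suc j) m x) = window_ldiff j x - m * window_rdiff j x"
    "window_rdiff j (move (Suc j) m x) = window_rdiff j x"
    "window_alt j (move (Suc j) m x) = window_alt j x"
    "\<And>l. l \<noteq> j \<Longrightarrow> l \<noteq> j + 1 \<Longrightarrow> move (Suc j) m x l = x l"
  using assms unfolding window_ldiff_def window_rdiff_def window_alt_def move_def
  by (auto simp: algebra_simps)

lemma window_normal_move_left_pair: "1 \<le> j \<Longrightarrow> window_normal j (move j m x) = window_normal j x"
proof (rule window_normal_eqI)
  assume "1 \<le> j"
  have "gcd a (b + m * a) = gcd a b" for a b :: int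
    using gcd_add_mult[of a m b] by (simp add: add.commute)
  then show "window_gcd j (move j m x) = window_gcd j x"
    using \<open>1 \<le> j\<close> by (simp add: window_move_left_pair window_gcd_def)
qed (auto simp: window_move_left_pair)

lemma window_normal_move_right_pair: "1 \<le> j \<Longrightarrow> window_normal j (move (Suc j) m x) = window_normal j x"
proof (rule window_normal_eqI)
  assume "1 \<le> j"
  have "gcd (a - m * b) b = gcd a b" for a b :: int
    using gcd_add_mult[of b "- m" a] by (simp add: gcd.commute)
  then show "window_gcd j (move (Suc j) m x) = window_gcd j x"
    using \<open>1 \<le> j\<close> by (simp add: window_move_right_pair window_gcd_def)
qed (auto simp: window_move_right_pair)

definition window_rotate :: "nat \<Rightarrow> (nat \<Rightarrow> int) \<Rightarrow> nat \<Rightarrow> int" where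
  "window_rotate j x = move (Suc j) 1 (move j 1 (move (Suc j) 1 x))"

lemma window_rotate_simps:
  assumes "1 \<le> j"
  shows "window_ldiff j (window_rotate j x) = - window_rdiff j x"
    "window_rdiff j (window_rotate j x) = window_ldiff j x"
    "window_normal j (window_rotate j x) = window_normal j x"
  using assms unfolding window_rotate_def
  by (simp_all add: window_move_left_pair window_move_right_pair
      window_normal_move_left_pair window_normal_move_right_pair)

lemma reach_window_rotate: "reach n x y \<Longrightarrow> 1 \<le> j \<Longrightarrow> j + 1 \<le> n \<Longrightarrow> reach n x (window_rotate j y)"
  unfolding window_rotate_def by (intro reach_move) auto

lemma window_normal_self:
  assumes "1 \<le> j" "window_rdiff j x = 0" "window_ldiff j x \<ge> 0"
  shows "window_normal j x = x"
  using assms unfolding window_normal_def window_gcd_def window_alt_def window_ldiff_def window_rdiff_def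
  by (intro ext) auto

text \<open>The moves at \<open>j\<close> and \<open>j + 1\<close> fix the alternating sum of the window
  \<open>x (j - 1), x j, x (j + 1)\<close> and act on its two differences by elementary operations,
  so the Euclidean algorithm reaches a normal form depending only on the alternating sum and the
  gcd of the differences.\<close>

lemma reach_window_normal:
  assumes "1 \<le> j" "j + 1 \<le> n"
  shows "reach n x (window_normal j x)"
proof (induction "nat \<bar>window_rdiff j x\<bar>" arbitrary: x rule: less_induct)
  case less
  show ?case
  proof (cases "window_rdiff j x = 0")
    case True
    show ?thesis
    proof (cases "window_ldiff j x \<ge> 0")
      case True
      then show ?thesis using window_normal_self \<open>window_rdiff j x = 0\<close> assms reach_refl by metis
    next
      case False
      define y where "y = window_rotate j (window_rotate j x)"
      have y: "window_rdiff j y = 0" "window_ldiff j y \<ge> 0" "window_normal j y = window_normal j x"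
        unfolding y_def using assms \<open>window_rdiff j x = 0\<close> False by (simp_all add: window_rotate_simps)
      have "reach n x y" unfolding y_def using assms by (intro reach_window_rotate reach_refl) auto
      then show ?thesis using window_normal_self[OF assms(1) y(1,2)] y(3) by simp
    qed
  next
    case False
    define q where "q = window_ldiff j x div window_rdiff j x"
    define y where "y = window_rotate j (move (Suc j) q x)"
    have "window_rdiff j y = window_ldiff j x mod window_rdiff j x"
      unfolding y_def q_def using assms
      by (simp add: window_rotate_simps window_move_right_pair minus_div_mult_eq_mod[symmetric] mult.commute)
    then have "nat \<bar>window_rdiff j y\<bar> < nat \<bar>window_rdiff j x\<bar>"
      using abs_mod_less[OF False] False by simp
    then have "reach n y (window_normal j y)" by (rule less.hyps)
    moreover have "window_normal j y = window_normal j x"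
      unfolding y_def using assms by (simp add: window_rotate_simps window_normal_move_right_pair)
    moreover have "reach n x y"
      unfolding y_def using assms by (intro reach_window_rotate reach_move reach_refl) auto
    ultimately show ?thesis using reach_trans by metis
  qed
qed

lemma reach_window:
  assumes "1 \<le> j" "j + 1 \<le> n" "window_alt j y = window_alt j x" "window_gcd j y = window_gcd j x"
    "\<And>l. l \<noteq> j - 1 \<Longrightarrow> l \<noteq> j \<Longrightarrow> l \<noteq> j + 1 \<Longrightarrow> y l = x l"
  shows "reach n x y"
proof -
  have "reach n x (window_normal j x)" "reach n y (window_normal j y)"
    using reach_window_normal assms(1,2) by blast+
  moreover have "window_normal j y = window_normal j x" using window_normal_eqI assms by blast
  ultimately show ?thesis using reach_sym reach_trans by metis
qed

lemma sum_neg_one_power_lessThan: "(\<Sum>i<k. (-1::int) ^ i) = (if odd k then 1 else 0)"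
  by (induction k) auto

lemma sum_neg_one_power_atMost: "(\<Sum>i\<le>r. (-1::int) ^ i) = (if even r then 1 else 0)"
  by (induction r) auto

lemma alt_sum_shift:
  assumes "even r"
  shows "alt_sum r (\<lambda>j. x j + t) = alt_sum r x + t"
proof -
  have "alt_sum r (\<lambda>j. x j + t) = alt_sum r x + t * (\<Sum>i\<le>r. (-1) ^ i)"
    unfolding alt_sum_def by (simp add: algebra_simps sum.distrib sum_distrib_left)
  then show ?thesis using assms by (simp add: sum_neg_one_power_atMost)
qed

lemma odd_count_shift:
  "odd_count r (\<lambda>j. x j + t) = (if even t then odd_count r x else Suc r - odd_count r x)"
proof (cases "even t")
  case False
  then have "{j. j \<le> r \<and> odd (x j + t)} = {j. j \<le> r \<and> even (x j)}" by auto
  then show ?thesis using False odd_count_complement[of r x] unfolding odd_count_def by simp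
qed (simp add: odd_count_def)

definition staircase :: "int \<Rightarrow> nat \<Rightarrow> nat \<Rightarrow> int" where
  "staircase c k i = (if i < k then c + 1 else c)"

lemma alt_sum_staircase:
  assumes "even r" "k \<le> Suc r"
  shows "alt_sum r (staircase c k) = c + (if odd k then 1 else 0)"
proof -
  have "alt_sum r (staircase c k) = alt_sum r (\<lambda>i. (if i < k then 1 else 0) + c)"
    unfolding staircase_def by (rule alt_sum_cong) simp
  also have "\<dots> = alt_sum r (\<lambda>i. if i < k then 1 else 0) + c"
    by (rule alt_sum_shift[OF assms(1)])
  also have "alt_sum r (\<lambda>i. if i < k then 1 else 0) = (\<Sum>i<k. (-1) ^ i)"
    unfolding alt_sum_def using assms(2) by (intro sum.mono_neutral_cong_right) auto
  finally show ?thesis by (simp add: sum_neg_one_power_lessThan)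
qed

lemma odd_count_staircase:
  assumes "k \<le> Suc r"
  shows "odd_count r (staircase c k) = (if even c then k else Suc r - k)"
proof (cases "even c")
  case True
  then have "{i. i \<le> r \<and> odd (staircase c k i)} = {..<k}"
    using assms unfolding staircase_def by auto
  then show ?thesis using True unfolding odd_count_def by simp
next
  case False
  then have "{i. i \<le> r \<and> odd (staircase c k i)} = {k..r}"
    using assms unfolding staircase_def by auto
  then show ?thesis using False unfolding odd_count_def by simp
qed

lemma staircase_step: "1 \<le> k \<Longrightarrow> staircase c k (k - 1) - staircase c k k = 1"
  unfolding staircase_def by auto

lemma staircase_realizes:
  assumes "even r" "\<beta> \<le> Suc r" "even (A - int \<beta>)"
  obtains c where "alt_sum r (staircase c \<beta>) = A" "odd_count r (staircase c \<beta>) = \<beta>"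
proof
  define c where "c = A - (if odd \<beta> then 1 else 0)"
  have "even c" using assms(3) unfolding c_def by (cases "odd \<beta>") auto
  then show "alt_sum r (staircase c \<beta>) = A" "odd_count r (staircase c \<beta>) = \<beta>"
    using assms by (simp_all add: alt_sum_staircase odd_count_staircase c_def)
qed

text \<open>The unit step certifies primitivity; keeping it away from the last entry of the block
  protects it from window moves at the end of the block.\<close>

lemma staircase_realizes_inner:
  assumes "even r" "1 \<le> \<beta>" "\<beta> \<le> r" "even (A - int \<beta>)"
  obtains c k where "1 \<le> k" "k + 1 \<le> r"
    "alt_sum r (staircase c k) = A" "odd_count r (staircase c k) = \<beta>"
proof (cases "\<beta> + 1 \<le> r")
  case True
  then show ?thesis using staircase_realizes[OF assms(1) _ assms(4)] assms(2) that by auto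
next
  case False
  then have "\<beta> = r" "2 \<le> r" using assms(1-3) by presburger+
  moreover have "odd (A - 1)" using assms(1,4) \<open>\<beta> = r\<close> by auto
  ultimately show ?thesis
    using assms(1) that[of 1 "A - 1"] by (simp add: alt_sum_staircase odd_count_staircase)
qed

lemma reach_affine:
  assumes "reach n a b"
  shows "reach n (\<lambda>l. if l \<le> n then c + g * a l else z l) (\<lambda>l. if l \<le> n then c + g * b l else z l)"
  using assms
proof (induction rule: reach.induct)
  case (reach_step x y i e)
  have "move i e (\<lambda>l. if l \<le> n then c + g * y l else z l) =
      (\<lambda>l. if l \<le> n then c + g * move i e y l else z l)"
    using reach_step.hyps unfolding move_def by (intro ext) (auto simp: algebra_simps)
  then show ?case using reach.reach_step[OF reach_step.IH reach_step.hyps(2-4)] by simp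
qed (rule reach_refl)

lemma reach_swap_pairs:
  assumes "p + 3 \<le> n" "x p = a" "x (p + 1) = a" "x (p + 2) = b" "x (p + 3) = b"
  shows "reach n x (x(p := b, p + 1 := b, p + 2 := a, p + 3 := a))"
proof -
  have "move (p + 2) 1 (move (p + 3) 1 (move (p + 1) 1 (move (p + 2) 1 x))) =
      x(p := b, p + 1 := b, p + 2 := a, p + 3 := a)"
    using assms unfolding move_def by (intro ext) auto
  moreover have "reach n x (move (p + 2) 1 (move (p + 3) 1 (move (p + 1) 1 (move (p + 2) 1 x))))"
    using assms(1) by (intro reach_move reach_refl) auto
  ultimately show ?thesis by simp
qed

lemma primitive_two_window_gcd:
  assumes "primitive 2 x"
  shows "window_gcd 1 x = 1"
proof -
  let ?g = "window_gcd 1 x"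
  have "?g dvd x 1 - x 0" "?g dvd x 2 - x 1"
    unfolding window_gcd_def window_ldiff_def window_rdiff_def by (simp_all add: numeral_2_eq_2)
  then have "?g dvd (x 2 - x 1) + (x 1 - x 0)" by (rule dvd_add[rotated])
  with \<open>?g dvd x 1 - x 0\<close> have "dvd_diffs ?g 2 x"
    unfolding dvd_diffs_def by (auto simp: le_Suc_eq numeral_2_eq_2)
  then have "?g dvd 1" using assms unfolding primitive_def by blast
  then show ?thesis unfolding window_gcd_def by simp
qed

lemma reach_classification_two:
  assumes "primitive 2 x" "primitive 2 y" "alt_sum 2 x = alt_sum 2 y" "\<forall>j>2. x j = y j"
  shows "reach 2 x y"
proof (rule reach_window[of 1])
  show "window_alt 1 y = window_alt 1 x"
    using assms(3) by (simp add: alt_sum_def window_alt_def numeral_2_eq_2)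
  show "window_gcd 1 y = window_gcd 1 x"
    using primitive_two_window_gcd[OF assms(1)] primitive_two_window_gcd[OF assms(2)] by simp
qed (use assms(4) in auto)

text \<open>A common divisor of the differences of the new block divides \<open>g\<close> (which occurs strictly
  inside the block) and the gcd of the last two differences of \<open>x\<close>, hence all differences of
  \<open>x\<close>.\<close>

lemma primitive_lift_last:
  assumes "primitive (Suc (Suc m)) x" "dvd_diffs g m x" "1 \<le> k" "k < m" "x (k - 1) - x k = g"
  shows "primitive m (x(m := x m + gcd (x (Suc m) - x m) (x (Suc (Suc m)) - x (Suc m))))"
    (is "primitive m ?x'")
  unfolding primitive_def
proof (intro allI impI)
  define h where "h = gcd (x (Suc m) - x m) (x (Suc (Suc m)) - x (Suc m))"
  fix d assume d: "dvd_diffs d m ?x'"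
  have x'_x: "?x' i = x i" if "i < m" for i using that by simp
  have "k - 1 < m" "k < m" "0 < m" using assms(3,4) by auto
  then have "d dvd x (k - 1) - x 0" "d dvd x k - x 0"
    using d x'_x unfolding dvd_diffs_def by (metis less_imp_le_nat)+
  from dvd_diff[OF this] have "d dvd g" using assms(5) by simp
  then have dvd_x: "dvd_diffs d m x" using assms(2) unfolding dvd_diffs_def using dvd_trans by blast
  have "d dvd ?x' m - ?x' 0" using d unfolding dvd_diffs_def by blast
  then have "d dvd x m + h - x 0" using \<open>0 < m\<close> unfolding h_def by simp
  moreover have "d dvd x m - x 0" using dvd_x unfolding dvd_diffs_def by simp
  ultimately have "d dvd (x m + h - x 0) - (x m - x 0)" by (rule dvd_diff)
  then have "d dvd h" by simp
  then have "d dvd x (Suc m) - x m" "d dvd x (Suc (Suc m)) - x (Suc m)"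
    unfolding h_def by (auto intro: dvd_trans)
  then have "dvd_diffs d (Suc (Suc m)) x" using dvd_x unfolding dvd_diffs_Suc by simp
  then show "d dvd 1" using assms(1) unfolding primitive_def by blast
qed

section \<open>Classification of primitive sequences\<close>

context
  fixes m :: nat
  assumes classification_m: "\<And>x y. primitive m x \<Longrightarrow> primitive m y \<Longrightarrow>
      alt_sum m x = alt_sum m y \<Longrightarrow> odd_count m x = odd_count m y \<Longrightarrow> \<forall>j>m. x j = y j \<Longrightarrow>
      reach m x y"
    and even_m: "even m"
    and two_le_m: "2 \<le> m"
begin

lemma reach_by_block:
  assumes "primitive m x" "primitive m y" "alt_sum m x = alt_sum m y"
    "odd_count m x = odd_count m y" "\<forall>j>m. x j = y j"
  shows "reach (Suc (Suc m)) x y"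
  using reach_mono[OF classification_m[OF assms]] by simp

lemma reach_by_block_cong:
  assumes "primitive m x" "\<And>i. i \<le> m \<Longrightarrow> x' i = x i" "\<And>i. i \<le> m \<Longrightarrow> y' i = y i"
    "primitive m y" "alt_sum m x = alt_sum m y" "odd_count m x = odd_count m y" "\<forall>j>m. x' j = y' j"
  shows "reach (Suc (Suc m)) x' y'"
  using assms by (intro reach_by_block)
    (simp_all add: primitive_cong[OF assms(2)] primitive_cong[OF assms(3)]
      alt_sum_cong[OF assms(2)] alt_sum_cong[OF assms(3)]
      odd_count_cong[OF assms(2)] odd_count_cong[OF assms(3)])

lemma reach_block_staircase:
  assumes "primitive m y"
  obtains c k where "1 \<le> k" "k + 1 \<le> m"
    "reach m y (\<lambda>i. if i \<le> m then staircase c k i else y i)"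
proof -
  obtain c k where ck: "1 \<le> k" "k + 1 \<le> m"
      "alt_sum m (staircase c k) = alt_sum m y" "odd_count m (staircase c k) = odd_count m y"
    using staircase_realizes_inner[OF even_m primitive_odd_count_bounds[OF assms]
        alt_sum_odd_count_parity] .
  define z where "z = (\<lambda>i. if i \<le> m then staircase c k i else y i)"
  have z: "\<And>i. i \<le> m \<Longrightarrow> z i = staircase c k i" unfolding z_def by simp
  have "primitive m z"
    using ck(1,2) staircase_step[OF ck(1), of c] by (intro primitive_if_unit_step[of k]) (auto simp: z)
  moreover have "alt_sum m y = alt_sum m z" "odd_count m y = odd_count m z"
    using ck alt_sum_cong[OF z] odd_count_cong[OF z] by simp_all
  ultimately have "reach m y z"
    by (intro classification_m[OF assms]) (auto simp: z_def)
  then show ?thesis using that ck(1,2) unfolding z_def by blast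
qed

lemma block_split:
  obtains r where "m = Suc (Suc r)" "even r"
proof
  show "m = Suc (Suc (m - 2))" "even (m - 2)" using even_m two_le_m by simp_all
qed

lemma reach_raise_tail:
  assumes "primitive m a" "a (Suc m) = t" "a (Suc (Suc m)) = t"
  shows "reach (Suc (Suc m)) a (a(Suc m := t + 2, Suc (Suc m) := t + 2))"
proof -
  obtain r where r: "m = Suc (Suc r)" "even r" by (rule block_split)
  define \<beta> where "\<beta> = odd_count m a"
  have \<beta>: "1 \<le> \<beta>" "\<beta> \<le> m" using primitive_odd_count_bounds[OF assms(1)] \<beta>_def by auto
  have "even ((alt_sum m a - 1) - int (\<beta> - 1))"
    using alt_sum_odd_count_parity[of m a] \<beta> unfolding \<beta>_def by (simp add: of_nat_diff)
  moreover have "\<beta> - 1 \<le> Suc r" using \<beta> r(1) by simp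
  ultimately obtain c where c: "alt_sum r (staircase c (\<beta> - 1)) = alt_sum m a - 1"
      "odd_count r (staircase c (\<beta> - 1)) = \<beta> - 1"
    using staircase_realizes[OF r(2)] by blast
  text \<open>With \<open>t + 1\<close> just before the tail, the window \<open>(t + 1, t, t)\<close> has coprime
    differences and can be turned into \<open>(t + 1, t + 2, t + 2)\<close>.\<close>
  define b where "b = (\<lambda>i. if i \<le> r then staircase c (\<beta> - 1) i else a i)(Suc r := t, m := t + 1)"
  have b_block: "\<And>i. i \<le> r \<Longrightarrow> b i = staircase c (\<beta> - 1) i" and b_tail: "b (Suc r) = t" "b m = t + 1"
    "b (Suc m) = t" "b (Suc (Suc m)) = t" "\<forall>j>m. b j = a j"
    unfolding b_def using r(1) assms(2,3) by auto
  have "alt_sum m b = alt_sum m a"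
    using alt_sum_Suc_Suc[OF r(2), of b] alt_sum_cong[OF b_block] c(1) b_tail(1,2) r(1) by simp
  moreover have "odd_count m b = odd_count m a"
    using odd_count_Suc_Suc[of r b] odd_count_cong[OF b_block] c(2) b_tail(1,2) r(1) \<beta> \<beta>_def by auto
  moreover have "primitive m b"
    using b_tail(1,2) r(1) by (intro primitive_if_unit_step[of m]) auto
  ultimately have ab: "reach (Suc (Suc m)) a b"
    using b_tail(5) by (intro reach_by_block[OF assms(1)]) auto
  define b' where "b' = b(Suc m := t + 2, Suc (Suc m) := t + 2)"
  have bb': "reach (Suc (Suc m)) b b'"
    using b_tail(2-4)
    by (intro reach_window[of "Suc m"])
      (auto simp: b'_def window_alt_def window_gcd_def window_ldiff_def window_rdiff_def)
  have "reach (Suc (Suc m)) b' (a(Suc m := t + 2, Suc (Suc m) := t + 2))"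
    by (rule reach_by_block_cong[OF \<open>primitive m b\<close> _ _ assms(1)])
      (use \<open>alt_sum m b = alt_sum m a\<close> \<open>odd_count m b = odd_count m a\<close> b_tail(5) in
        \<open>auto simp: b'_def\<close>)
  with reach_trans[OF ab bb'] show ?thesis by (rule reach_trans)
qed

lemma reach_shift_tail:
  assumes "primitive m a" "a (Suc m) = t" "a (Suc (Suc m)) = t" "even (t' - t)"
  shows "reach (Suc (Suc m)) a (a(Suc m := t', Suc (Suc m) := t'))"
proof -
  define a' where "a' q = a(Suc m := t + 2 * q, Suc (Suc m) := t + 2 * q)" for q
  have up: "reach (Suc (Suc m)) (a' q) (a' (q + 1))" for q
  proof -
    have "primitive m (a' q)" using assms(1) by (subst primitive_cong[of m _ a]) (auto simp: a'_def)
    from reach_raise_tail[OF this] show ?thesis by (simp add: a'_def algebra_simps)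
  qed
  have "reach (Suc (Suc m)) a (a' q)" for q
  proof (induction q rule: int_induct[where k = 0])
    case base
    have "a' 0 = a" using assms(2,3) unfolding a'_def by auto
    then show ?case by (simp add: reach_refl)
  next
    case (step1 q)
    then have "reach (Suc (Suc m)) a (a' q)" by simp
    then show ?case using up by (rule reach_trans)
  next
    case (step2 q)
    then have "reach (Suc (Suc m)) a (a' q)" by simp
    moreover have "reach (Suc (Suc m)) (a' q) (a' (q - 1))" using up[of "q - 1"] by (simp add: reach_sym)
    ultimately show ?case by (rule reach_trans)
  qed
  moreover obtain q where "t' - t = 2 * q" using assms(4) by (rule evenE)
  then have "t' = t + 2 * q" by simp
  ultimately show ?thesis unfolding a'_def by simp
qed

lemma reach_equal_tails_same_parity:
  assumes "primitive m a" "primitive m b" "a (Suc m) = a (Suc (Suc m))" "b (Suc m) = b (Suc (Suc m))"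
    "even (a (Suc m) - b (Suc m))" "alt_sum m a = alt_sum m b" "odd_count m a = odd_count m b"
    "\<forall>j>Suc (Suc m). a j = b j"
  shows "reach (Suc (Suc m)) a b"
proof -
  define a' where "a' = a(Suc m := b (Suc m), Suc (Suc m) := b (Suc m))"
  have "reach (Suc (Suc m)) a a'"
    unfolding a'_def using assms(5) by (intro reach_shift_tail[OF assms(1) refl assms(3)[symmetric]])
      (simp add: dvd_diff_commute)
  moreover have "reach (Suc (Suc m)) a' b"
    by (rule reach_by_block_cong[OF assms(1) _ refl assms(2,6,7)])
      (use assms(4,8) in \<open>auto simp: a'_def less_Suc_eq\<close>)
  ultimately show ?thesis by (rule reach_trans)
qed

lemma reach_odd_tail_to_zero:
  assumes "primitive m a" "a (Suc m) = t" "a (Suc (Suc m)) = t" "odd t" "odd_count m a + 2 \<le> m"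
  obtains b where "reach (Suc (Suc m)) a b" "primitive m b" "b (Suc m) = 0" "b (Suc (Suc m)) = 0"
    "alt_sum m b = alt_sum m a" "odd_count m b = odd_count m a + 2" "\<forall>j>Suc (Suc m). b j = a j"
proof -
  obtain r where r: "m = Suc (Suc r)" "even r" by (rule block_split)
  define \<beta> where "\<beta> = odd_count m a"
  have \<beta>: "1 \<le> \<beta>" "\<beta> \<le> r" using primitive_odd_count_bounds[OF assms(1)] assms(5) r(1) \<beta>_def by auto
  obtain c k where ck: "1 \<le> k" "k + 1 \<le> r"
      "alt_sum r (staircase c k) = alt_sum m a" "odd_count r (staircase c k) = \<beta>"
    using staircase_realizes_inner[OF r(2) \<beta>] alt_sum_odd_count_parity[of m a] \<beta>_def by blast
  define b where "b = (\<lambda>i. if i \<le> r then staircase c k i else a i)(Suc r := 0, m := 0)"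
  have b_block: "\<And>i. i \<le> r \<Longrightarrow> b i = staircase c k i"
    and b_tail: "b (Suc r) = 0" "b m = 0" "\<forall>j>m. b j = a j"
    unfolding b_def using r(1) by auto
  have "alt_sum m b = alt_sum m a"
    using alt_sum_Suc_Suc[OF r(2), of b] alt_sum_cong[OF b_block] ck(3) b_tail(1,2) r(1) by simp
  moreover have "odd_count m b = odd_count m a"
    using odd_count_Suc_Suc[of r b] odd_count_cong[OF b_block] ck(4) b_tail(1,2) r(1) \<beta>_def by simp
  moreover have step: "b (k - 1) - b k = 1"
    using b_block ck(1,2) staircase_step[OF ck(1)] by simp
  then have "primitive m b" using ck(1,2) r(1) by (intro primitive_if_unit_step[of k]) auto
  ultimately have ab: "reach (Suc (Suc m)) a b"
    using b_tail(3) by (intro reach_by_block[OF assms(1)]) auto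
  text \<open>Exchange the pair of zeros with the odd tail pair: the block gains two odd entries.\<close>
  define b' where "b' = b(Suc r := t, Suc r + 1 := t, Suc r + 2 := 0, Suc r + 3 := 0)"
  have "reach (Suc (Suc m)) b b'"
    unfolding b'_def using r(1) b_tail assms(2,3)
    by (intro reach_swap_pairs) (auto simp: eval_nat_numeral)
  moreover have b'_block: "\<And>i. i \<le> r \<Longrightarrow> b' i = b i"
    and b'_tail: "b' (Suc r) = t" "b' m = t" "b' (Suc m) = 0" "b' (Suc (Suc m)) = 0"
    "\<forall>j>Suc (Suc m). b' j = a j"
    unfolding b'_def using r(1) b_tail(3) by auto
  moreover have "primitive m b'"
    using step b'_block[of k] b'_block[of "k - 1"] ck(1,2) r(1)
    by (intro primitive_if_unit_step[of k]) auto
  moreover have "alt_sum m b' = alt_sum m a"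
    using alt_sum_Suc_Suc[OF r(2), of b'] alt_sum_cong[OF b'_block] alt_sum_cong[OF b_block]
      ck(3) b'_tail(1,2) r(1) by simp
  moreover have "odd_count m b' = odd_count m a + 2"
    using odd_count_Suc_Suc[of r b'] odd_count_cong[OF b'_block] odd_count_cong[OF b_block]
      ck(4) b'_tail(1,2) r(1) assms(4) \<beta>_def by simp
  ultimately show ?thesis using that reach_trans[OF ab] by blast
qed

lemma reach_equal_tails_oriented:
  assumes "primitive m a" "primitive m b" "a (Suc m) = a (Suc (Suc m))" "b (Suc m) = b (Suc (Suc m))"
    "alt_sum (Suc (Suc m)) a = alt_sum (Suc (Suc m)) b"
    "odd_count (Suc (Suc m)) a = odd_count (Suc (Suc m)) b" "\<forall>j>Suc (Suc m). a j = b j"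
    "odd (a (Suc m)) \<or> even (b (Suc m))"
  shows "reach (Suc (Suc m)) a b"
proof -
  have alt: "alt_sum m a = alt_sum m b"
    using assms(5) alt_sum_equal_pair[OF even_m assms(3)] alt_sum_equal_pair[OF even_m assms(4)] by simp
  have odd: "odd_count m a + (if odd (a (Suc m)) then 2 else 0) =
      odd_count m b + (if odd (b (Suc m)) then 2 else 0)"
    using assms(6) odd_count_equal_pair[OF assms(3)] odd_count_equal_pair[OF assms(4)] by simp
  show ?thesis
  proof (cases "odd (a (Suc m)) \<and> even (b (Suc m))")
    case False
    with assms(8) have "even (a (Suc m) - b (Suc m))" "odd_count m a = odd_count m b"
      using odd by auto
    then show ?thesis using reach_equal_tails_same_parity[OF assms(1-4) _ alt _ assms(7)] by blast
  next
    case True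
    then have "odd_count m b = odd_count m a + 2" using odd by simp
    then have "odd_count m a + 2 \<le> m" using primitive_odd_count_bounds(2)[OF assms(2)] by simp
    then obtain c where c: "reach (Suc (Suc m)) a c" "primitive m c" "c (Suc m) = 0"
        "c (Suc (Suc m)) = 0" "alt_sum m c = alt_sum m a" "odd_count m c = odd_count m a + 2"
        "\<forall>j>Suc (Suc m). c j = a j"
      using reach_odd_tail_to_zero[OF assms(1) refl assms(3)[symmetric]] True by blast
    have "reach (Suc (Suc m)) c b"
      using c True alt \<open>odd_count m b = odd_count m a + 2\<close> assms(4,7)
      by (intro reach_equal_tails_same_parity[OF c(2) assms(2)]) auto
    with c(1) show ?thesis by (rule reach_trans)
  qed
qed

lemma reach_equal_tails:
  assumes "primitive m a" "primitive m b" "a (Suc m) = a (Suc (Suc m))" "b (Suc m) = b (Suc (Suc m))"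
    "alt_sum (Suc (Suc m)) a = alt_sum (Suc (Suc m)) b"
    "odd_count (Suc (Suc m)) a = odd_count (Suc (Suc m)) b" "\<forall>j>Suc (Suc m). a j = b j"
  shows "reach (Suc (Suc m)) a b"
proof (cases "odd (a (Suc m)) \<or> even (b (Suc m))")
  case True
  then show ?thesis using reach_equal_tails_oriented[OF assms] by blast
next
  case False
  then have "reach (Suc (Suc m)) b a"
    using assms(7) by (intro reach_equal_tails_oriented[OF assms(2,1,4,3) assms(5,6)[symmetric]]) auto
  then show ?thesis by (rule reach_sym)
qed

lemma reach_block_gcd_witness:
  obtains x' g k where "reach m x x'" "\<forall>j>m. x' j = x j" "dvd_diffs g m x'"
    "1 \<le> k" "k < m" "x' (k - 1) - x' k = g"
proof (cases "diff_gcd m x = 0")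
  case True
  have "dvd_diffs 0 m x" using dvd_diffs_diff_gcd[of m x] True by simp
  moreover have "1 \<le> m" using two_le_m by simp
  ultimately have "0 dvd x 1 - x 0" unfolding dvd_diffs_def by blast
  then have "x (1 - 1) - x 1 = 0" by simp
  with \<open>dvd_diffs 0 m x\<close> two_le_m show ?thesis by (intro that[of x 0 1]) (simp_all add: reach_refl)
next
  case False
  define g where "g = diff_gcd m x"
  define u where "u i = (x i - x 0) div g" for i
  have "primitive m u" unfolding u_def g_def using primitive_div_diff_gcd[OF False] .
  then obtain c k where k: "1 \<le> k" "k + 1 \<le> m"
      and uz: "reach m u (\<lambda>i. if i \<le> m then staircase c k i else u i)"
    by (rule reach_block_staircase)
  define x' where "x' l = (if l \<le> m then x 0 + g * staircase c k l else x l)" for l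
  have "reach m (\<lambda>l. if l \<le> m then x 0 + g * u l else x l)
      (\<lambda>l. if l \<le> m then x 0 + g * (if l \<le> m then staircase c k l else u l) else x l)"
    by (rule reach_affine[OF uz])
  moreover have "x 0 + g * u l = x l" if "l \<le> m" for l
    using dvd_diffs_diff_gcd[of m x] that unfolding u_def g_def dvd_diffs_def by simp
  then have "(\<lambda>l. if l \<le> m then x 0 + g * u l else x l) = x" by auto
  moreover have "(\<lambda>l. if l \<le> m then x 0 + g * (if l \<le> m then staircase c k l else u l) else x l) = x'"
    unfolding x'_def by (intro ext) simp
  moreover have "dvd_diffs g m x'" unfolding dvd_diffs_def x'_def by (simp add: algebra_simps)
  moreover have "x' (k - 1) - x' k = g"
  proof -
    have "k - 1 \<le> m" "k \<le> m" using k by simp_all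
    then have "x' (k - 1) - x' k = g * (staircase c k (k - 1) - staircase c k k)"
      unfolding x'_def by (simp add: algebra_simps)
    then show ?thesis using staircase_step[OF k(1)] by simp
  qed
  moreover have "\<forall>j>m. x' j = x j" unfolding x'_def by simp
  ultimately show ?thesis using that[of x' g k] k by simp
qed

lemma reach_primitive_block_equal_tail:
  assumes "primitive (Suc (Suc m)) x"
  obtains y where "reach (Suc (Suc m)) x y" "primitive m y" "y (Suc m) = y (Suc (Suc m))"
    "\<forall>j>Suc (Suc m). y j = x j"
proof -
  obtain x1 g k where x1: "reach m x x1" "\<forall>j>m. x1 j = x j" "dvd_diffs g m x1"
      "1 \<le> k" "k < m" "x1 (k - 1) - x1 k = g"
    by (rule reach_block_gcd_witness)
  have "primitive (Suc (Suc m)) x1"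
    using reach_primitive[OF reach_mono[OF x1(1)]] assms by simp
  define u where "u = x1 m"
  define v where "v = x1 (Suc m)"
  define w where "w = x1 (Suc (Suc m))"
  define h where "h = gcd (v - u) (w - v)"
  define x2 where "x2 = x1(m := u + h, Suc m := u + 2 * h, Suc (Suc m) := u - v + w + h)"
  have "h dvd v - u" "h dvd w - v" "h \<ge> 0" unfolding h_def by simp_all
  have "reach (Suc (Suc m)) x1 x2"
  proof (rule reach_window[of "Suc m"])
    have "gcd h (w - v - h) = h"
      using gcd_add_mult[of h "-1" "w - v"] \<open>h dvd w - v\<close> \<open>h \<ge> 0\<close> by simp
    then show "window_gcd (Suc m) x2 = window_gcd (Suc m) x1"
      unfolding window_gcd_def window_ldiff_def window_rdiff_def x2_def u_def v_def w_def h_def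
      by (simp add: algebra_simps)
  qed (auto simp: x2_def u_def v_def w_def window_alt_def)
  have "primitive m (x1(m := u + h))"
    using primitive_lift_last[OF \<open>primitive (Suc (Suc m)) x1\<close> x1(3-6)] unfolding u_def v_def w_def h_def .
  then have "primitive m x2" by (subst primitive_cong[of m _ "x1(m := u + h)"]) (auto simp: x2_def)
  then obtain c k' where k': "1 \<le> k'" "k' + 1 \<le> m"
      and x2x3: "reach m x2 (\<lambda>i. if i \<le> m then staircase c k' i else x2 i)" (is "reach m x2 ?x3")
    by (rule reach_block_staircase)
  define x4 where "x4 = window_normal (Suc m) ?x3"
  have "reach (Suc (Suc m)) ?x3 x4" unfolding x4_def by (rule reach_window_normal) simp_all
  moreover have "reach (Suc (Suc m)) x x1" "reach (Suc (Suc m)) x2 ?x3"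
    using reach_mono[OF x1(1)] reach_mono[OF x2x3] by simp_all
  ultimately have "reach (Suc (Suc m)) x x4"
    using \<open>reach (Suc (Suc m)) x1 x2\<close> reach_trans by metis
  moreover have "primitive m x4"
  proof (rule primitive_if_unit_step[of k'])
    have "k' - 1 < m" "k' < m" using k' by simp_all
    then have "x4 (k' - 1) = staircase c k' (k' - 1)" "x4 k' = staircase c k' k'"
      unfolding x4_def window_normal_def by simp_all
    then show "\<bar>x4 (k' - 1) - x4 k'\<bar> = 1" using staircase_step[OF k'(1)] by simp
  qed (use k' in simp_all)
  moreover have "x4 (Suc m) = x4 (Suc (Suc m))" unfolding x4_def window_normal_def by simp
  moreover have "\<forall>j>Suc (Suc m). x4 j = x j"
    using x1(2) unfolding x4_def window_normal_def x2_def by simp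
  ultimately show ?thesis using that by blast
qed

lemma reach_classification_step:
  assumes "primitive (Suc (Suc m)) x" "primitive (Suc (Suc m)) y"
    "alt_sum (Suc (Suc m)) x = alt_sum (Suc (Suc m)) y"
    "odd_count (Suc (Suc m)) x = odd_count (Suc (Suc m)) y" "\<forall>j>Suc (Suc m). x j = y j"
  shows "reach (Suc (Suc m)) x y"
proof -
  obtain x' where x': "reach (Suc (Suc m)) x x'" "primitive m x'" "x' (Suc m) = x' (Suc (Suc m))"
      "\<forall>j>Suc (Suc m). x' j = x j"
    using reach_primitive_block_equal_tail[OF assms(1)] .
  obtain y' where y': "reach (Suc (Suc m)) y y'" "primitive m y'" "y' (Suc m) = y' (Suc (Suc m))"
      "\<forall>j>Suc (Suc m). y' j = y j"
    using reach_primitive_block_equal_tail[OF assms(2)] .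
  have "reach (Suc (Suc m)) x' y'"
    using assms(3-5) x'(4) y'(4) reach_alt_sum[OF x'(1)] reach_alt_sum[OF y'(1)]
      reach_odd_count[OF x'(1)] reach_odd_count[OF y'(1)]
    by (intro reach_equal_tails[OF x'(2) y'(2) x'(3) y'(3)]) auto
  then show ?thesis using reach_trans[OF x'(1)] reach_sym[OF y'(1)] by (metis reach_trans)
qed

end

theorem reach_classification:
  assumes "even n" "2 \<le> n" "primitive n x" "primitive n y" "alt_sum n x = alt_sum n y"
    "odd_count n x = odd_count n y" "\<forall>j>n. x j = y j"
  shows "reach n x y"
  using assms
proof (induction n arbitrary: x y rule: less_induct)
  case (less n)
  show ?case
  proof (cases "n = 2")
    case True
    then show ?thesis using reach_classification_two less.prems(3-5,7) by simp
  next
    case False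
    define m where "m = n - 2"
    have m: "n = Suc (Suc m)" "even m" "2 \<le> m"
      using less.prems(1,2) False unfolding m_def by presburger+
    have IH: "\<And>x y. primitive m x \<Longrightarrow> primitive m y \<Longrightarrow> alt_sum m x = alt_sum m y \<Longrightarrow>
        odd_count m x = odd_count m y \<Longrightarrow> \<forall>j>m. x j = y j \<Longrightarrow> reach m x y"
      using less.IH m by simp
    from IH m(2,3) less.prems(3-7) show ?thesis
      unfolding m(1) by (rule reach_classification_step)
  qed
qed

section \<open>The group action in difference coordinates\<close>

definition diff_vec :: "nat \<Rightarrow> (nat \<Rightarrow> int) \<Rightarrow> nat \<Rightarrow> int" where
  "diff_vec n x = (\<lambda>j. if 1 \<le> j \<and> j \<le> n then x j - x 0 else 0)"

definition sigma_inv :: "nat \<Rightarrow> nat \<Rightarrow> (nat \<Rightarrow> int) \<Rightarrow> nat \<Rightarrow> int" where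
  "sigma_inv n i k =
     (if i = 1 then (\<lambda>j. if 1 < j \<and> j \<le> n then k j - k 1 else k j)
      else (\<lambda>j. if j = i - 1 then k i else if j = i then 2 * k i - k (i - 1) else k j))"

lemma diff_vec_in_vecs: "diff_vec n x \<in> vecs n"
  unfolding diff_vec_def vecs_def by auto

lemma diff_vec_vecs: "k \<in> vecs n \<Longrightarrow> diff_vec n k = k"
  unfolding diff_vec_def vecs_def by (intro ext) auto

lemma diff_vec_move_one:
  "1 \<le> i \<Longrightarrow> i \<le> n \<Longrightarrow> diff_vec n (move i 1 y) = sigma n i (diff_vec n y)"
  unfolding diff_vec_def move_def sigma_def by (intro ext) auto

lemma diff_vec_move_minus_one:
  "1 \<le> i \<Longrightarrow> i \<le> n \<Longrightarrow> diff_vec n (move i (-1) y) = sigma_inv n i (diff_vec n y)"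
  unfolding diff_vec_def move_def sigma_inv_def by (intro ext) auto

lemma sigma_inv_sigma:
  assumes "1 \<le> i" "i \<le> n" "k \<in> vecs n"
  shows "sigma n i k \<in> vecs n" "sigma_inv n i k \<in> vecs n"
    "sigma n i (sigma_inv n i k) = k" "sigma_inv n i (sigma n i k) = k"
proof -
  have k: "diff_vec n k = k" using diff_vec_vecs assms(3) by blast
  show "sigma n i k \<in> vecs n" "sigma_inv n i k \<in> vecs n"
    using diff_vec_move_one[OF assms(1,2), of k] diff_vec_move_minus_one[OF assms(1,2), of k]
      diff_vec_in_vecs k by metis+
  show "sigma n i (sigma_inv n i k) = k" "sigma_inv n i (sigma n i k) = k"
    using diff_vec_move_one[OF assms(1,2)] diff_vec_move_minus_one[OF assms(1,2)] k assms(1)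
    by (metis move_move add.right_inverse add.left_inverse move_zero)+
qed

lemma inv_into_sigma:
  assumes "1 \<le> i" "i \<le> n" "k \<in> vecs n"
  shows "inv_into (vecs n) (sigma n i) k = sigma_inv n i k"
proof (rule inv_into_f_eq)
  show "inj_on (sigma n i) (vecs n)"
    using sigma_inv_sigma(4)[OF assms(1,2)] by (metis inj_onI)
qed (use sigma_inv_sigma[OF assms] in auto)

lemma reach_imp_grp: "reach n x y \<Longrightarrow> \<exists>g\<in>grp n. g (diff_vec n x) = diff_vec n y"
proof (induction rule: reach.induct)
  case (reach_refl x)
  show ?case by (rule bexI[of _ id]) (simp_all add: grp.grp_id)
next
  case (reach_step x y i e)
  then obtain g where g: "g \<in> grp n" "g (diff_vec n x) = diff_vec n y" by blast
  have i: "i \<in> {1..n}" using reach_step by simp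
  show ?case
  proof (cases "e = 1")
    case True
    then have "(sigma n i \<circ> g) (diff_vec n x) = diff_vec n (move i e y)"
      using g reach_step.hyps by (simp add: diff_vec_move_one)
    then show ?thesis using grp.grp_gen[OF g(1) i] by blast
  next
    case False
    then have "(inv_into (vecs n) (sigma n i) \<circ> g) (diff_vec n x) = diff_vec n (move i e y)"
      using g reach_step.hyps
      by (simp add: inv_into_sigma diff_vec_in_vecs diff_vec_move_minus_one)
    then show ?thesis using grp.grp_inv[OF g(1) i] by blast
  qed
qed

lemma grp_imp_reach: "g \<in> grp n \<Longrightarrow> k \<in> vecs n \<Longrightarrow> \<exists>y. reach n k y \<and> diff_vec n y = g k"
proof (induction rule: grp.induct)
  case grp_id
  then show ?case using diff_vec_vecs reach_refl by fastforce
next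
  case (grp_gen g i)
  then obtain y where y: "reach n k y" "diff_vec n y = g k" by blast
  have "reach n k (move i 1 y)" using y(1) grp_gen.hyps by (intro reach_step) auto
  moreover have "diff_vec n (move i 1 y) = (sigma n i \<circ> g) k"
    using y(2) grp_gen.hyps by (simp add: diff_vec_move_one)
  ultimately show ?case by blast
next
  case (grp_inv g i)
  then obtain y where y: "reach n k y" "diff_vec n y = g k" by blast
  have "reach n k (move i (-1) y)" using y(1) grp_inv.hyps by (intro reach_step) auto
  moreover have "diff_vec n (move i (-1) y) = (inv_into (vecs n) (sigma n i) \<circ> g) k"
    using y(2) grp_inv.hyps diff_vec_in_vecs[of n y]
    by (simp add: diff_vec_move_minus_one inv_into_sigma)
  ultimately show ?case by blast
qed

lemma grp_comp: "h \<in> grp n \<Longrightarrow> g \<in> grp n \<Longrightarrow> h \<circ> g \<in> grp n"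
  by (induction rule: grp.induct) (auto simp: comp_assoc intro: grp.intros)

lemma self_in_orbit: "k \<in> orbit n k"
proof -
  have "k = id k" "id \<in> grp n" by (simp_all add: grp.grp_id)
  then show ?thesis unfolding orbit_def by blast
qed

lemma orbit_subset:
  assumes "g \<in> grp n"
  shows "orbit n (g k) \<subseteq> orbit n k"
proof
  fix x assume "x \<in> orbit n (g k)"
  then obtain h where "h \<in> grp n" "x = (h \<circ> g) k" unfolding orbit_def by auto
  then show "x \<in> orbit n k" unfolding orbit_def using grp_comp[OF _ assms] by blast
qed

lemma gam_diff_vec: "gam n (diff_vec n x) = diff_gcd n x"
proof -
  have "(\<lambda>i. x i - x 0) ` {..n} = insert 0 ((\<lambda>i. x i - x 0) ` {1..n})"
    by (auto simp: image_iff) (metis atLeastAtMost_iff le_0_eq not_less_eq_eq)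
  moreover have "diff_vec n x ` {1..n} = (\<lambda>i. x i - x 0) ` {1..n}"
    unfolding diff_vec_def by (intro image_cong) auto
  ultimately show ?thesis unfolding gam_def diff_gcd_def by simp
qed

lemma gam_vecs: "k \<in> vecs n \<Longrightarrow> gam n k = diff_gcd n k"
  using gam_diff_vec[of n k] diff_vec_vecs by simp

lemma gam_grp: "g \<in> grp n \<Longrightarrow> k \<in> vecs n \<Longrightarrow> gam n (g k) = gam n k"
  using grp_imp_reach gam_diff_vec gam_vecs reach_diff_gcd by metis

definition parity_defect :: "nat \<Rightarrow> (nat \<Rightarrow> int) \<Rightarrow> int" where
  "parity_defect n x = \<bar>2 * int (odd_count n x) - int n - 1\<bar>"

lemma parity_defect_cong: "(\<And>i. i \<le> n \<Longrightarrow> x i = y i) \<Longrightarrow> parity_defect n x = parity_defect n y"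
  unfolding parity_defect_def using odd_count_cong by metis

lemma parity_defect_shift: "parity_defect n (\<lambda>j. x j + t) = parity_defect n x"
proof (cases "even t")
  case False
  have eq: "2 * int (Suc n - odd_count n x) - int n - 1 = - (2 * int (odd_count n x) - int n - 1)"
    using odd_count_le[of n x] by (simp add: of_nat_diff)
  have "parity_defect n (\<lambda>j. x j + t) = \<bar>2 * int (Suc n - odd_count n x) - int n - 1\<bar>"
    unfolding parity_defect_def odd_count_shift using False by simp
  also have "\<dots> = parity_defect n x" unfolding eq parity_defect_def by simp
  finally show ?thesis .
qed (simp add: parity_defect_def odd_count_shift)

lemma reach_parity_defect: "reach n x y \<Longrightarrow> parity_defect n y = parity_defect n x"
  unfolding parity_defect_def by (simp add: reach_odd_count)

lemma parity_defect_primitive: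
  assumes "even n" "primitive n x"
  shows "odd (parity_defect n x)" "1 \<le> parity_defect n x" "parity_defect n x \<le> int n - 1"
proof -
  have "odd (2 * int (odd_count n x) - int n - 1)" using assms(1) by simp
  then show "odd (parity_defect n x)" unfolding parity_defect_def by simp
  moreover have "parity_defect n x \<ge> 0" unfolding parity_defect_def by simp
  ultimately show "1 \<le> parity_defect n x" by (cases "parity_defect n x = 0") auto
  show "parity_defect n x \<le> int n - 1"
    using primitive_odd_count_bounds[OF assms(2)] unfolding parity_defect_def by simp
qed

lemma abs_reflection_eq_parity:
  fixes a b n :: int
  assumes "even (a - b)" "even n" "\<bar>2 * a - n - 1\<bar> = \<bar>2 * b - n - 1\<bar>"
  shows "a = b"
  using assms unfolding abs_if by presburger

text \<open>The parity defect only determines the number of odd entries up to complementation;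
  the alternating sum, which has the same parity as that number, breaks the tie.\<close>

lemma odd_count_eq_if_parity_defect_eq:
  assumes "even n" "parity_defect n x = parity_defect n y" "alt_sum n x = alt_sum n y"
  shows "odd_count n x = odd_count n y"
proof -
  have "int (odd_count n x) - int (odd_count n y) =
      (alt_sum n y - int (odd_count n y)) - (alt_sum n x - int (odd_count n x))"
    using assms(3) by simp
  then have "even (int (odd_count n x) - int (odd_count n y))"
    using dvd_diff[OF alt_sum_odd_count_parity[of n y] alt_sum_odd_count_parity[of n x]] by simp
  moreover have "even (int n)" using assms(1) by simp
  ultimately have "int (odd_count n x) = int (odd_count n y)"
    using assms(2) unfolding parity_defect_def by (rule abs_reflection_eq_parity)
  then show ?thesis by simp
qed

lemma div_add_mult_diff:
  assumes "(g::int) dvd a" "g dvd b" "g dvd c"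
  shows "(a + e * (b - c)) div g = a div g + e * (b div g - c div g)"
proof (cases "g = 0")
  case False
  obtain a' b' c' where "a = g * a'" "b = g * b'" "c = g * c'" using assms by (auto elim!: dvdE)
  then have "a + e * (b - c) = g * (a' + e * (b' - c'))" by (simp add: algebra_simps)
  then show ?thesis using False \<open>a = g * a'\<close> \<open>b = g * b'\<close> \<open>c = g * c'\<close> by simp
qed simp

lemma reach_div:
  assumes "reach n x y" "\<forall>i\<le>n. g dvd x i"
  shows "reach n (\<lambda>i. x i div g) (\<lambda>i. y i div g) \<and> (\<forall>i\<le>n. g dvd y i)"
  using assms
proof (induction rule: reach.induct)
  case (reach_step x y i e)
  then have IH: "reach n (\<lambda>i. x i div g) (\<lambda>i. y i div g)" "\<forall>i\<le>n. g dvd y i" by simp_all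
  have "g dvd y (i - 1)" "g dvd y i" using IH(2) reach_step.hyps by simp_all
  then have "(\<lambda>j. move i e y j div g) = move i e (\<lambda>j. y j div g)"
    using IH(2) reach_step.hyps unfolding move_def by (intro ext) (auto simp: div_add_mult_diff)
  moreover have "\<forall>j\<le>n. g dvd move i e y j"
    using IH(2) \<open>g dvd y (i - 1)\<close> \<open>g dvd y i\<close> unfolding move_def by auto
  ultimately show ?case using reach.reach_step[OF IH(1) reach_step.hyps(2-4)] by simp
qed (simp add: reach_refl)

lemma vecs_zero: "k \<in> vecs n \<Longrightarrow> k 0 = 0"
  unfolding vecs_def by simp

lemma delt_parity_defect:
  assumes "k \<in> vecs (2 * s)"
  shows "delt s k = parity_defect (2 * s) (\<lambda>i. k i div gam (2 * s) k)"
proof -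
  have "{i \<in> {1..2 * s}. odd (k i div gam (2 * s) k)} = {i. i \<le> 2 * s \<and> odd (k i div gam (2 * s) k)}"
    using vecs_zero[OF assms] by (auto simp: Suc_le_eq) (metis div_0 even_zero gr0I)
  then show ?thesis unfolding delt_def parity_defect_def alph_def odd_count_def by simp
qed

lemma delt_grp:
  assumes "g \<in> grp (2 * s)" "k \<in> vecs (2 * s)"
  shows "delt s (g k) = delt s k"
proof -
  define n where "n = 2 * s"
  define \<gamma> where "\<gamma> = gam n k"
  obtain y where y: "reach n k y" "diff_vec n y = g k" using grp_imp_reach assms unfolding n_def by blast
  have "\<forall>i\<le>n. \<gamma> dvd k i"
    using dvd_diffs_diff_gcd[of n k] vecs_zero[OF assms(2)] gam_vecs[OF assms(2)]
    unfolding \<gamma>_def n_def dvd_diffs_def by simp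
  from reach_div[OF y(1) this] have y_div: "reach n (\<lambda>i. k i div \<gamma>) (\<lambda>i. y i div \<gamma>)"
    and dvd_y: "\<forall>i\<le>n. \<gamma> dvd y i" by blast+
  have "g k i div \<gamma> = y i div \<gamma> + - (y 0 div \<gamma>)" if "i \<le> n" for i
    using that dvd_y y(2)[symmetric] unfolding diff_vec_def by (cases "i = 0") (auto simp: div_diff)
  then have "parity_defect n (\<lambda>i. g k i div \<gamma>) = parity_defect n (\<lambda>i. y i div \<gamma> + - (y 0 div \<gamma>))"
    by (rule parity_defect_cong)
  also have "\<dots> = parity_defect n (\<lambda>i. y i div \<gamma>)" by (rule parity_defect_shift)
  also have "\<dots> = parity_defect n (\<lambda>i. k i div \<gamma>)" by (rule reach_parity_defect[OF y_div])
  also have "\<dots> = delt s k" using delt_parity_defect[OF assms(2)] unfolding \<gamma>_def n_def by simp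
  finally show ?thesis
    using delt_parity_defect[of "g k" s] diff_vec_in_vecs[of n y] y(2) gam_grp[OF assms]
    unfolding \<gamma>_def n_def by simp
qed

lemma normalize_vec:
  assumes "k \<in> vecs n" "k \<noteq> (\<lambda>_. 0)"
  shows "gam n k > 0" "primitive n (\<lambda>i. k i div gam n k)" "k i = gam n k * (k i div gam n k)"
proof -
  have k0: "k 0 = 0" by (rule vecs_zero[OF assms(1)])
  have "gam n k \<noteq> 0"
  proof
    assume "gam n k = 0"
    then have "k i = 0" if "i \<le> n" for i
      using dvd_diffs_diff_gcd[of n k] gam_vecs[OF assms(1)] that k0 unfolding dvd_diffs_def by simp
    moreover have "k i = 0" if "\<not> i \<le> n" for i using assms(1) that unfolding vecs_def by simp
    ultimately have "k = (\<lambda>_. 0)" by (meson ext)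
    with assms(2) show False by contradiction
  qed
  moreover have "gam n k \<ge> 0" unfolding gam_def by simp
  ultimately show "gam n k > 0" by simp
  show "primitive n (\<lambda>i. k i div gam n k)"
    using primitive_div_diff_gcd[of n k] \<open>gam n k \<noteq> 0\<close> k0 gam_vecs[OF assms(1)] by simp
  have "gam n k dvd k i"
  proof (cases "i \<in> {1..n}")
    case True
    then show ?thesis unfolding gam_def by (simp add: Gcd_dvd)
  next
    case False
    then show ?thesis using assms(1) unfolding vecs_def by simp
  qed
  then show "k i = gam n k * (k i div gam n k)" by simp
qed

lemma invariants_range:
  assumes "k \<in> vecs (2 * s)" "k \<noteq> (\<lambda>_. 0)"
  shows "gam (2 * s) k > 0" "odd (delt s k)" "1 \<le> delt s k" "delt s k \<le> 2 * int s - 1"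
proof -
  note bounds = parity_defect_primitive[OF _ normalize_vec(2)[OF assms]]
  show "gam (2 * s) k > 0" by (rule normalize_vec(1)[OF assms])
  show "odd (delt s k)" "1 \<le> delt s k" "delt s k \<le> 2 * int s - 1"
    using bounds delt_parity_defect[OF assms(1)] by simp_all
qed

lemma grp_connects_equal_invariants:
  assumes "1 \<le> s" "k \<in> vecs (2 * s)" "k \<noteq> (\<lambda>_. 0)" "k' \<in> vecs (2 * s)" "k' \<noteq> (\<lambda>_. 0)"
    "gam (2 * s) k = gam (2 * s) k'" "delt s k = delt s k'"
  shows "\<exists>g\<in>grp (2 * s). g k = k'"
proof -
  define n where "n = 2 * s"
  define \<gamma> where "\<gamma> = gam n k"
  define u where "u i = k i div \<gamma>" for i
  define u' where "u' i = k' i div \<gamma>" for i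
  have k: "k i = \<gamma> * u i" "k' i = \<gamma> * u' i" for i
    using normalize_vec(3)[OF assms(2,3)] normalize_vec(3)[OF assms(4,5)] assms(6)
    unfolding u_def u'_def \<gamma>_def n_def by simp_all
  have prim: "primitive n u" "primitive n u'"
    using normalize_vec(2)[OF assms(2,3)] normalize_vec(2)[OF assms(4,5)] assms(6)
    unfolding u_def u'_def \<gamma>_def n_def by simp_all
  text \<open>Shift the normalized target so that both alternating sums agree.\<close>
  define t where "t = alt_sum n u - alt_sum n u'"
  define z where "z j = (if j \<le> n then u' j + t else u j)" for j
  have z: "\<And>j. j \<le> n \<Longrightarrow> z j = u' j + t" unfolding z_def by simp
  have "even n" "2 \<le> n" using assms(1) unfolding n_def by simp_all
  have alt: "alt_sum n u = alt_sum n z"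
    using alt_sum_cong[OF z] alt_sum_shift[OF \<open>even n\<close>] unfolding t_def by simp
  have "parity_defect n z = parity_defect n (\<lambda>j. u' j + t)" by (rule parity_defect_cong[OF z])
  also have "\<dots> = parity_defect n u'" by (rule parity_defect_shift)
  also have "\<dots> = delt s k'"
    using delt_parity_defect[OF assms(4)] assms(6) unfolding u'_def \<gamma>_def n_def by simp
  also have "\<dots> = parity_defect n u"
    using delt_parity_defect[OF assms(2)] assms(7) unfolding u_def \<gamma>_def n_def by simp
  finally have "parity_defect n z = parity_defect n u" .
  then have "odd_count n u = odd_count n z"
    using odd_count_eq_if_parity_defect_eq[OF \<open>even n\<close> _ alt] by simp
  moreover have "primitive n (\<lambda>j. u' j + t)"
    using prim(2) unfolding primitive_def dvd_diffs_def by simp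
  then have "primitive n z" using primitive_cong[OF z] by simp
  ultimately have uz: "reach n u z"
    using reach_classification[OF \<open>even n\<close> \<open>2 \<le> n\<close> prim(1) _ alt] by (simp add: z_def)
  have "reach n (\<lambda>l. if l \<le> n then \<gamma> * u l else 0) (\<lambda>l. if l \<le> n then \<gamma> * z l else 0)"
    using reach_affine[OF uz, where c = 0 and g = \<gamma> and z = "\<lambda>_. 0"] by (simp only: add_0)
  then obtain g where "g \<in> grp n"
    "g (diff_vec n (\<lambda>l. if l \<le> n then \<gamma> * u l else 0)) = diff_vec n (\<lambda>l. if l \<le> n then \<gamma> * z l else 0)"
    using reach_imp_grp by blast
  moreover have "diff_vec n (\<lambda>l. if l \<le> n then \<gamma> * u l else 0) = k"
    using k(1)[symmetric] vecs_zero[OF assms(2)] assms(2) unfolding diff_vec_def vecs_def n_def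
    by (intro ext) auto
  moreover have "diff_vec n (\<lambda>l. if l \<le> n then \<gamma> * z l else 0) = k'"
    using k(2)[symmetric] vecs_zero[OF assms(4)] assms(4) z unfolding diff_vec_def vecs_def n_def
    by (intro ext) (auto simp: algebra_simps)
  ultimately show ?thesis unfolding n_def by auto
qed

lemma invariants_surj:
  assumes "c > 0" "odd d" "1 \<le> d" "d \<le> 2 * int s - 1"
  obtains k where "k \<in> vecs (2 * s)" "k \<noteq> (\<lambda>_. 0)" "gam (2 * s) k = c" "delt s k = d"
proof -
  obtain a where a: "2 * int s + 1 - d = 2 * int a" "1 \<le> a" "a \<le> s"
  proof -
    have "even (2 * int s + 1 - d)" using assms(2) by simp
    then obtain q where q: "2 * int s + 1 - d = 2 * q" by (rule evenE)
    then show ?thesis using that[of "nat q"] assms(3,4) by simp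
  qed
  define k where "k j = (if 1 \<le> j \<and> j \<le> a then c else 0)" for j
  have k_vecs: "k \<in> vecs (2 * s)" unfolding k_def vecs_def using a by auto
  have "k 1 = c" unfolding k_def using a by simp
  then have "k \<noteq> (\<lambda>_. 0)" using assms(1) by auto
  have "k ` {1..2 * s} = {c, 0}"
  proof
    show "k ` {1..2 * s} \<subseteq> {c, 0}" unfolding k_def by auto
    have "k 1 \<in> k ` {1..2 * s}" "k (2 * s) \<in> k ` {1..2 * s}" using a by auto
    moreover have "k (2 * s) = 0" unfolding k_def using a by auto
    ultimately show "{c, 0} \<subseteq> k ` {1..2 * s}" using \<open>k 1 = c\<close> by auto
  qed
  then have gam: "gam (2 * s) k = c" unfolding gam_def using assms(1) by simp
  have "{i \<in> {1..2 * s}. odd (k i div c)} = {1..a}" unfolding k_def using assms(1) a by auto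
  then have "delt s k = d" unfolding delt_def alph_def gam using a by simp
  with k_vecs \<open>k \<noteq> (\<lambda>_. 0)\<close> gam show ?thesis using that by blast
qed

lemma orbit_invariants:
  assumes "k' \<in> orbit (2 * s) k" "k \<in> vecs (2 * s)"
  shows "gam (2 * s) k' = gam (2 * s) k" "delt s k' = delt s k"
  using assms gam_grp delt_grp unfolding orbit_def by auto

lemma orbit_eq_iff_invariants:
  assumes "1 \<le> s" "k \<in> vecs (2 * s)" "k \<noteq> (\<lambda>_. 0)" "k' \<in> vecs (2 * s)" "k' \<noteq> (\<lambda>_. 0)"
  shows "orbit (2 * s) k = orbit (2 * s) k' \<longleftrightarrow> gam (2 * s) k = gam (2 * s) k' \<and> delt s k = delt s k'"
proof
  assume "orbit (2 * s) k = orbit (2 * s) k'"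
  then have "k' \<in> orbit (2 * s) k" using self_in_orbit by metis
  then show "gam (2 * s) k = gam (2 * s) k' \<and> delt s k = delt s k'"
    using orbit_invariants assms(2) by metis
next
  assume "gam (2 * s) k = gam (2 * s) k' \<and> delt s k = delt s k'"
  then obtain g g' where "g \<in> grp (2 * s)" "g k = k'" "g' \<in> grp (2 * s)" "g' k' = k"
    using grp_connects_equal_invariants assms by metis
  then show "orbit (2 * s) k = orbit (2 * s) k'"
    using orbit_subset by (metis subset_antisym)
qed

theorem mainTheorem5:
  fixes s :: nat
  assumes "s \<ge> 1"
  shows "\<exists>f. bij_betw f (orbits (2*s))
                {(g :: int, d :: int). g > 0 \<and> odd d \<and> 1 \<le> d \<and> d \<le> 2 * int s - 1}
          \<and> (\<forall>k \<in> vecs (2*s) - {\<lambda>_. 0}. f (orbit (2*s) k) = (gam (2*s) k, delt s k))"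
proof -
  define f where "f Q = (\<lambda>k. (gam (2 * s) k, delt s k)) (SOME k. k \<in> Q)" for Q
  have f_orbit: "f (orbit (2 * s) k) = (gam (2 * s) k, delt s k)" if "k \<in> vecs (2 * s)" for k
    using orbit_invariants[OF someI[where P = "\<lambda>k'. k' \<in> orbit (2 * s) k", OF self_in_orbit] that]
    unfolding f_def by simp
  have "inj_on f (orbits (2 * s))"
    using orbit_eq_iff_invariants[OF assms] f_orbit by (auto simp: inj_on_def orbits_def)
  moreover have "f ` orbits (2 * s) =
      {(g :: int, d :: int). g > 0 \<and> odd d \<and> 1 \<le> d \<and> d \<le> 2 * int s - 1}"
  proof
    show "f ` orbits (2 * s) \<subseteq> {(g, d). g > 0 \<and> odd d \<and> 1 \<le> d \<and> d \<le> 2 * int s - 1}"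
      using invariants_range f_orbit by (auto simp: orbits_def)
    show "{(g, d). g > 0 \<and> odd d \<and> 1 \<le> d \<and> d \<le> 2 * int s - 1} \<subseteq> f ` orbits (2 * s)"
    proof clarify
      fix c d :: int assume "c > 0" "odd d" "1 \<le> d" "d \<le> 2 * int s - 1"
      then obtain k where "k \<in> vecs (2 * s)" "k \<noteq> (\<lambda>_. 0)" "(c, d) = f (orbit (2 * s) k)"
        using invariants_surj f_orbit by metis
      then show "(c, d) \<in> f ` orbits (2 * s)" unfolding orbits_def by blast
    qed
  qed
  ultimately show ?thesis using f_orbit unfolding bij_betw_def by blast
qed

end
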